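(* Let $\rho,T>0$, $\theta\ge0$, $N\ge2$, $\alpha:=e^{-\rho T/N}$, $\kappa:=2\theta+\frac12$, and let $\bm\omega,\bm\nu,\delta_k,\phi_k$ be as in the context. Then for all $i\in\{1,\dots,N+1\}$, $$\omega_i=\frac{(1-\alpha)\kappa+\alpha\big(\frac{\alpha(\kappa-1)}{\kappa}\big)^{N+1-i}}{\kappa(\kappa-\alpha(\kappa-1))},$$ in particular $\omega_{N+1}=1/\kappa$. Moreover, $$\nu_1=\frac{1-\alpha}{\delta_{N+1}}\Big(\phi_2+(1-\alpha)\sum_{j=2}^N(\alpha\kappa)^{j-1}\phi_{j+1}+(\alpha\kappa)^N\Big),$$ $$\nu_{N+1}=\frac{1-\alpha}{\delta_{N+1}}\Big((\alpha(\kappa-1))^N+(1-\alpha)\sum_{j=2}^N(\alpha(\kappa-1))^{N+1-j}\delta_{j-1}+\delta_N\Big),$$ and for $i=2,\dots,N$, $$\nu_i=\frac{1-\alpha}{\delta_{N+1}}\Big((\alpha(\kappa-1))^{i-1}\phi_{i+1}+(1-\alpha)\sum_{j=2}^{i-1}(\alpha(\kappa-1))^{i-j}\delta_{j-1}\phi_{i+1}+(1-\alpha)\sum_{j=i}^N(\alpha\kappa)^{j-i}\delta_{i-1}\phi_{j+1}+(\alpha\kappa)^{N+1-i}\delta_{i-1}\Big).$$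
   Context: Let $\tilde\Gamma$ be the $(N+1)\times(N+1)$ lower triangular matrix with $\tilde\Gamma_{ij}=0$ for $i<j$, $\tilde\Gamma_{ii}=1/2$, $\tilde\Gamma_{ij}=\alpha^{i-j}$ for $i>j$, $\Gamma:=\tilde\Gamma+\tilde\Gamma^\top$, $\bm\nu=(\nu_1,\dots,\nu_{N+1})^\top:=(\Gamma+\tilde\Gamma+2\theta\mathrm{Id})^{-1}\mathbf1$ and $\bm\omega=(\omega_1,\dots,\omega_{N+1})^\top:=(\Gamma-\tilde\Gamma+2\theta\mathrm{Id})^{-1}\mathbf1$ (both matrices are invertible), where $\mathbf1$ is the all-ones vector. Let $B:=(1-\alpha^2)(\mathrm{Id}+\Gamma^{-1}(\tilde\Gamma+2\theta\mathrm{Id}))$ (a tridiagonal matrix with diagonal $(1-2\alpha^2+\kappa,1+\alpha^2(\kappa-2)+\kappa,\dots,1+\alpha^2(\kappa-2)+\kappa,1-\alpha^2+\kappa)$, superdiagonal $-\alpha\kappa$, subdiagonal $-\alpha(\kappa-1)$); $\delta_k$ ($1\le k\le N+1$) is its $k$-th leading principal minor and $\delta_0:=1$. Define $\phi_{N+2}:=1$, $\phi_{N+1}:=1-\alpha^2+\kappa$ and $\phi_k:=(1+\alpha^2(\kappa-2)+\kappa)\phi_{k+1}-\alpha^2\kappa(\kappa-1)\phi_{k+2}$ for $k=N,\dots,2$. *)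

theory Defs
  imports "Jordan_Normal_Form.Matrix" "Jordan_Normal_Form.Determinant"
begin

text \<open>All matrices are (N+1) x (N+1) JNF matrices; paper index i (1..N+1) corresponds
  to JNF index i-1.\<close>

definition minv :: "nat \<Rightarrow> real mat \<Rightarrow> real mat" where
  "minv n A = (THE B. B \<in> carrier_mat n n \<and> A * B = 1\<^sub>m n \<and> B * A = 1\<^sub>m n)"

definition GammaT :: "nat \<Rightarrow> real \<Rightarrow> real mat" where
  "GammaT N \<alpha> = mat (N+1) (N+1) (\<lambda>(i,j). if i < j then 0 else if i = j then 1/2 else \<alpha> ^ (i - j))"

definition Gamma :: "nat \<Rightarrow> real \<Rightarrow> real mat" where
  "Gamma N \<alpha> = GammaT N \<alpha> + (GammaT N \<alpha>)\<^sup>T"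

definition nu_vec :: "nat \<Rightarrow> real \<Rightarrow> real \<Rightarrow> real vec" where
  "nu_vec N \<alpha> \<theta> = minv (N+1) (Gamma N \<alpha> + GammaT N \<alpha> + (2*\<theta>) \<cdot>\<^sub>m 1\<^sub>m (N+1)) *\<^sub>v vec (N+1) (\<lambda>_. 1)"

definition omega_vec :: "nat \<Rightarrow> real \<Rightarrow> real \<Rightarrow> real vec" where
  "omega_vec N \<alpha> \<theta> = minv (N+1) (Gamma N \<alpha> - GammaT N \<alpha> + (2*\<theta>) \<cdot>\<^sub>m 1\<^sub>m (N+1)) *\<^sub>v vec (N+1) (\<lambda>_. 1)"

definition nu :: "nat \<Rightarrow> real \<Rightarrow> real \<Rightarrow> nat \<Rightarrow> real" where
  "nu N \<alpha> \<theta> i = nu_vec N \<alpha> \<theta> $ (i - 1)"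

definition omega :: "nat \<Rightarrow> real \<Rightarrow> real \<Rightarrow> nat \<Rightarrow> real" where
  "omega N \<alpha> \<theta> i = omega_vec N \<alpha> \<theta> $ (i - 1)"

definition Bmat :: "nat \<Rightarrow> real \<Rightarrow> real \<Rightarrow> real mat" where
  "Bmat N \<alpha> \<theta> = (1 - \<alpha>^2) \<cdot>\<^sub>m (1\<^sub>m (N+1) + minv (N+1) (Gamma N \<alpha>) * (GammaT N \<alpha> + (2*\<theta>) \<cdot>\<^sub>m 1\<^sub>m (N+1)))"

text \<open>k-th leading principal minor of B (delta 0 = 1, determinant of the empty matrix)\<close>
definition delta :: "nat \<Rightarrow> real \<Rightarrow> real \<Rightarrow> nat \<Rightarrow> real" where
  "delta N \<alpha> \<theta> k = det (mat k k (\<lambda>(i,j). Bmat N \<alpha> \<theta> $$ (i,j)))"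

text \<open>phi_aux m = phi_{N+2-m}\<close>
fun phi_aux :: "real \<Rightarrow> real \<Rightarrow> nat \<Rightarrow> real" where
  "phi_aux \<alpha> \<kappa> 0 = 1"
| "phi_aux \<alpha> \<kappa> (Suc 0) = 1 - \<alpha>^2 + \<kappa>"
| "phi_aux \<alpha> \<kappa> (Suc (Suc m)) =
     (1 + \<alpha>^2 * (\<kappa> - 2) + \<kappa>) * phi_aux \<alpha> \<kappa> (Suc m) - \<alpha>^2 * \<kappa> * (\<kappa> - 1) * phi_aux \<alpha> \<kappa> m"

definition phi :: "nat \<Rightarrow> real \<Rightarrow> real \<Rightarrow> nat \<Rightarrow> real" where
  "phi N \<alpha> \<kappa> k = phi_aux \<alpha> \<kappa> (N + 2 - k)"

end

theory Submission
  imports Defs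
begin

text \<open>\<open>Gamma N \<alpha>\<close> is the Kac--Murdock--Szeg\<H>o matrix \<open>(\<alpha>\<^bsup>|i-j|\<^esup>)\<close>. Its inverse is \<open>1/(1-\<alpha>\<^sup>2)\<close>
  times a tridiagonal matrix \<open>K\<close> whose quadratic form is \<open>(1-\<alpha>\<^sup>2) y\<^sub>0\<^sup>2 + \<Sum>\<^sub>i (y\<^sub>i\<^sub>+\<^sub>1 - \<alpha> y\<^sub>i)\<^sup>2\<close>,
  so \<open>Gamma\<close> is positive definite; as \<open>x \<bullet> GammaT x = x \<bullet> Gamma x / 2\<close>, so is the matrix
  \<open>M = Gamma + GammaT + 2\<theta>\<close> of the system for \<open>\<nu>\<close>. Multiplying \<open>M \<nu> = 1\<close> by \<open>Gamma\<^sup>-\<^sup>1\<close> turns it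
  into \<open>B \<nu> = K 1\<close>, where \<open>B = Bmat\<close> is tridiagonal with constant off-diagonals \<open>-\<alpha>\<kappa>\<close>, \<open>-\<alpha>(\<kappa>-1)\<close>.
  Its adjugate is given by Usmani's formula in terms of the leading minors \<open>\<delta>\<^sub>k\<close> and the trailing
  minors \<open>\<phi>\<^sub>k\<close>; the diagonal entries of \<open>B adj(B)\<close> all equal \<open>\<delta>\<^sub>N\<^sub>+\<^sub>1\<close> because the Casoratian
  \<open>\<delta>\<^sub>k\<^sub>+\<^sub>1 \<phi>\<^sub>k\<^sub>+\<^sub>2 - \<alpha>\<^sup>2\<kappa>(\<kappa>-1) \<delta>\<^sub>k \<phi>\<^sub>k\<^sub>+\<^sub>3\<close> of the two three-term recurrences is constant.
  The matrix \<open>Gamma - GammaT + 2\<theta>\<close> of the system for \<open>\<omega>\<close> is upper triangular, with \<open>\<kappa>\<close> on the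
  diagonal and \<open>\<alpha>\<^bsup>j-i\<^esup>\<close> above it, and \<open>\<omega>\<close> is found by backward substitution.\<close>

lemma minv_eqI:
  fixes A B :: "real mat"
  assumes A: "A \<in> carrier_mat n n" and B: "B \<in> carrier_mat n n" and AB: "A * B = 1\<^sub>m n"
  shows "minv n A = B"
  unfolding minv_def
proof (rule the_equality)
  show "B \<in> carrier_mat n n \<and> A * B = 1\<^sub>m n \<and> B * A = 1\<^sub>m n"
    using B AB mat_mult_left_right_inverse[OF A B AB] by auto
next
  fix C assume "C \<in> carrier_mat n n \<and> A * C = 1\<^sub>m n \<and> C * A = 1\<^sub>m n"
  then have C: "C \<in> carrier_mat n n" and CA: "C * A = 1\<^sub>m n" by auto
  have "C = C * (A * B)" using AB C by simp
  also have "\<dots> = (C * A) * B" using assoc_mult_mat[OF C A B] by simp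
  also have "\<dots> = B" using CA B by simp
  finally show "C = B" .
qed

lemma minv_mult_vec_eqI:
  fixes A :: "real mat"
  assumes A: "A \<in> carrier_mat n n" and det: "det A \<noteq> 0"
    and x: "x \<in> carrier_vec n" and Ax: "A *\<^sub>v x = b"
  shows "minv n A *\<^sub>v b = x"
proof -
  have "A \<in> Units (ring_mat TYPE(real) n undefined)" by (rule det_non_zero_imp_unit[OF A det])
  then obtain B where B: "B \<in> carrier_mat n n" "A * B = 1\<^sub>m n"
    unfolding Units_def ring_mat_def by auto
  have "minv n A *\<^sub>v b = (B * A) *\<^sub>v x"
    using minv_eqI[OF A B] A B x Ax by (simp add: assoc_mult_mat_vec)
  also have "\<dots> = x" using mat_mult_left_right_inverse[OF A B] x by simp
  finally show ?thesis .
qed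

lemma det_nonzero_if_pos_def:
  fixes A :: "real mat"
  assumes A: "A \<in> carrier_mat n n"
    and pos: "\<And>x. x \<in> carrier_vec n \<Longrightarrow> x \<noteq> 0\<^sub>v n \<Longrightarrow> x \<bullet> (A *\<^sub>v x) > 0"
  shows "det A \<noteq> 0"
  using pos by (fastforce simp: det_0_iff_vec_prod_zero[OF A])

lemma sum_lessThan_neighbours:
  fixes g :: "nat \<Rightarrow> 'a::comm_monoid_add"
  assumes j: "j < n"
    and zero: "\<And>k. k < n \<Longrightarrow> k \<noteq> j \<Longrightarrow> k \<noteq> j + 1 \<Longrightarrow> k + 1 \<noteq> j \<Longrightarrow> g k = 0"
  shows "(\<Sum>k<n. g k) = g j + (if j + 1 < n then g (j + 1) else 0) + (if 0 < j then g (j - 1) else 0)"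
proof -
  let ?S = "{j} \<union> (if j + 1 < n then {j + 1} else {}) \<union> (if 0 < j then {j - 1} else {})"
  have "(\<Sum>k<n. g k) = (\<Sum>k\<in>?S. g k)"
    by (rule sum.mono_neutral_right) (use j in \<open>auto split: if_splits intro!: zero\<close>)
  also have "\<dots> = g j + (if j + 1 < n then g (j + 1) else 0) + (if 0 < j then g (j - 1) else 0)"
    using j by (cases "j + 1 < n"; cases "0 < j") (auto simp: sum.insert_if ac_simps)
  finally show ?thesis .
qed

lemma sum_lessThan_Suc_split_ends:
  fixes F :: "nat \<Rightarrow> 'a :: comm_monoid_add"
  assumes "2 \<le> N"
  shows "(\<Sum>j<N+1. F j) = F 0 + (\<Sum>j=2..N. F (j-1)) + F N"
  using assms
proof (induction N rule: nat_induct_at_least)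
  case base
  show ?case by (simp add: numeral_2_eq_2 add.commute)
next
  case (Suc n)
  have "(\<Sum>j=2..Suc n. F (j-1)) = (\<Sum>j=2..n. F (j-1)) + F n"
    using Suc.hyps by (simp add: sum.cl_ivl_Suc)
  with Suc.IH show ?case by (simp add: ac_simps)
qed

lemma sum_atLeastAtMost_split:
  fixes F :: "nat \<Rightarrow> 'a :: comm_monoid_add"
  assumes "1 \<le> a" "a \<le> c" "c \<le> b + 1"
  shows "(\<Sum>j=a..b. F j) = (\<Sum>j=a..c-1. F j) + (\<Sum>j=c..b. F j)"
proof -
  have "{a..b} = {a..c-1} \<union> {c..b}" "{a..c-1} \<inter> {c..b} = {}" using assms by auto
  then show ?thesis by (simp add: sum.union_disjoint)
qed

lemma smult_mat_mult_vec:
  "A \<in> carrier_mat n m \<Longrightarrow> v \<in> carrier_vec m \<Longrightarrow> (k \<cdot>\<^sub>m A) *\<^sub>v v = (k :: 'a :: comm_ring) \<cdot>\<^sub>v (A *\<^sub>v v)"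
  by (rule eq_vecI) (auto simp: scalar_prod_def sum_distrib_left mult.assoc)

lemma mult_mat_vec_nth_sum:
  "A \<in> carrier_mat n n \<Longrightarrow> v \<in> carrier_vec n \<Longrightarrow> i < n \<Longrightarrow>
    (A *\<^sub>v v) $ i = (\<Sum>k<n. A $$ (i, k) * v $ k)"
  by (simp add: scalar_prod_def atLeast0LessThan)

lemma quadratic_form_add:
  fixes A B :: "'a :: comm_ring mat"
  assumes "A \<in> carrier_mat n n" "B \<in> carrier_mat n n" "x \<in> carrier_vec n"
  shows "x \<bullet> ((A + B) *\<^sub>v x) = x \<bullet> (A *\<^sub>v x) + x \<bullet> (B *\<^sub>v x)"
  using assms by (simp add: add_mult_distrib_mat_vec scalar_prod_add_distrib[of _ n])

lemma common_factor3:
  fixes a d X S Y :: real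
  shows "1 / d * ((1 - a) * X + (1 - a)^2 * S + (1 - a) * Y) = (1 - a) / d * (X + (1 - a) * S + Y)"
  by (simp add: divide_inverse algebra_simps power2_eq_square)

lemma common_factor4:
  fixes a d X S T Y :: real
  shows "1 / d * ((1 - a) * X + ((1 - a)^2 * S + (1 - a)^2 * T) + (1 - a) * Y)
       = (1 - a) / d * (X + (1 - a) * S + (1 - a) * T + Y)"
  by (simp add: divide_inverse algebra_simps power2_eq_square)

lemma omega_recursion_identity:
  fixes a k Q D :: real
  assumes k: "k \<noteq> 0" and D: "D \<noteq> 0" and D_eq: "D = k * (k - a * (k - 1))"
  shows "((1 - a) * k + a * (a * (k - 1) / k * Q)) / D + a * (1 + (1 - k) * (((1 - a) * k + a * Q) / D))
       = 1 + (1 - k) * (((1 - a) * k + a * (a * (k - 1) / k * Q)) / D)"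
proof -
  have "(((1 - a) * k + a * (a * (k - 1) / k * Q)) / D + a * (1 + (1 - k) * (((1 - a) * k + a * Q) / D))) * (D * k)
      = (1 + (1 - k) * (((1 - a) * k + a * (a * (k - 1) / k * Q)) / D)) * (D * k)"
    using k D by (simp add: field_simps) (simp add: D_eq algebra_simps)
  then show ?thesis using k D by simp
qed

section \<open>Tridiagonal matrices with constant off-diagonals\<close>

definition tridiag :: "nat \<Rightarrow> (nat \<Rightarrow> 'a) \<Rightarrow> 'a \<Rightarrow> 'a \<Rightarrow> 'a :: comm_ring_1 mat" where
  "tridiag n d u l = mat n n (\<lambda>(i,j).
     if i = j then d i else if j = Suc i then - u else if i = Suc j then - l else 0)"

definition leading_minor :: "'a :: comm_ring_1 mat \<Rightarrow> nat \<Rightarrow> 'a" where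
  "leading_minor A k = det (mat k k (\<lambda>(i,j). A $$ (i,j)))"

lemma tridiag_carrier: "tridiag n d u l \<in> carrier_mat n n"
  by (simp add: tridiag_def)

lemma dim_tridiag [simp]: "dim_row (tridiag n d u l) = n" "dim_col (tridiag n d u l) = n"
  by (simp_all add: tridiag_def)

lemma tridiag_nth:
  "i < n \<Longrightarrow> j < n \<Longrightarrow> tridiag n d u l $$ (i,j) =
     (if i = j then d i else if j = Suc i then - u else if i = Suc j then - l else 0)"
  by (simp add: tridiag_def)

lemma tridiag_mult_vec_nth:
  assumes y: "y \<in> carrier_vec n" and i: "i < n"
  shows "(tridiag n d u l *\<^sub>v y) $ i =
     d i * y $ i - (if i + 1 < n then u * y $ (i + 1) else 0) - (if 0 < i then l * y $ (i - 1) else 0)"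
proof -
  let ?g = "\<lambda>k. tridiag n d u l $$ (i, k) * y $ k"
  have "(tridiag n d u l *\<^sub>v y) $ i = (\<Sum>k<n. ?g k)"
    by (rule mult_mat_vec_nth_sum[OF tridiag_carrier y i])
  also have "\<dots> = ?g i + (if i + 1 < n then ?g (i + 1) else 0) + (if 0 < i then ?g (i - 1) else 0)"
    by (rule sum_lessThan_neighbours[OF i]) (use i in \<open>auto simp: tridiag_def\<close>)
  finally show ?thesis
    using i by (auto simp: tridiag_def)
qed

lemma det_tridiagonal_last_row:
  fixes F :: "nat \<times> nat \<Rightarrow> 'a :: comm_ring_1"
  assumes band: "\<And>i j. i < k+2 \<Longrightarrow> j < k+2 \<Longrightarrow> Suc j < i \<or> Suc i < j \<Longrightarrow> F (i,j) = 0"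
  shows "det (mat (k+2) (k+2) F)
       = F (k+1,k+1) * det (mat (k+1) (k+1) F) - F (k+1,k) * F (k,k+1) * det (mat k k F)"
proof -
  let ?A = "mat (k+2) (k+2) F"
  let ?g = "\<lambda>j. ?A $$ (k+1,j) * cofactor ?A (k+1) j"
  have "det ?A = (\<Sum>j<k+2. ?g j)"
    by (rule laplace_expansion_row[of _ "k+2"]) simp_all
  also have "\<dots> = ?g (k+1) + ?g k"
    by (subst sum_lessThan_neighbours[of "k+1"]) (auto simp: band)
  finally have row: "det ?A = ?g (k+1) + ?g k" .
  have "mat_delete ?A (k+1) (k+1) = mat (k+1) (k+1) F"
    by (rule eq_matI) (auto simp: mat_delete_def)
  then have last: "cofactor ?A (k+1) (k+1) = det (mat (k+1) (k+1) F)"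
    by (simp add: cofactor_def)
  define D where "D = mat_delete ?A (k+1) k"
  have D: "D \<in> carrier_mat (k+1) (k+1)" by (simp add: D_def mat_delete_def)
  have D_nth: "\<And>i j. i < k+1 \<Longrightarrow> j < k+1 \<Longrightarrow> D $$ (i,j) = F (i, if j < k then j else Suc j)"
    by (auto simp: D_def mat_delete_def)
  have "mat_delete D k k = mat k k F"
    by (rule eq_matI) (auto simp: mat_delete_def D_def)
  then have minor: "cofactor D k k = det (mat k k F)"
    by (simp add: cofactor_def)
  let ?h = "\<lambda>i. D $$ (i,k) * cofactor D i k"
  have "det D = (\<Sum>i<k+1. ?h i)"
    by (rule laplace_expansion_column[OF D]) simp
  also have "\<dots> = ?h k"
    using band[of "k - 1" "Suc k"]
    by (subst sum_lessThan_neighbours[of k]) (auto simp: D_nth band)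
  finally have "det D = F (k, k+1) * det (mat k k F)"
    by (simp add: D_nth minor)
  moreover have "cofactor ?A (k+1) k = - det D"
    by (simp add: cofactor_def D_def)
  ultimately show ?thesis
    unfolding row last by simp
qed

lemma leading_minor_tridiag_Suc:
  assumes "k < n"
  shows "leading_minor (tridiag n d u l) (Suc k)
       = d k * leading_minor (tridiag n d u l) k
         - (if 0 < k then u * l * leading_minor (tridiag n d u l) (k - 1) else 0)"
proof (cases k)
  case 0
  then show ?thesis
    using assms by (simp add: leading_minor_def det_single tridiag_nth)
next
  case (Suc m)
  have "leading_minor (tridiag n d u l) (m+2)
      = d (m+1) * leading_minor (tridiag n d u l) (m+1) - u * l * leading_minor (tridiag n d u l) m"
    unfolding leading_minor_def
  proof (subst det_tridiagonal_last_row)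
    show "(\<lambda>(i,j). tridiag n d u l $$ (i,j)) (i,j) = 0" if "i < m+2" "j < m+2" "Suc j < i \<or> Suc i < j" for i j
      using that assms Suc by (auto simp: tridiag_nth)
  qed (use assms Suc in \<open>simp add: tridiag_nth\<close>)
  then show ?thesis using Suc by simp
qed

text \<open>Usmani's formula for the adjugate: \<open>D\<close> are the leading principal minors and \<open>P k\<close> is the
  principal minor on the rows \<open>k - 1, \<dots>, n\<close> (so \<open>P (n+2) = 1\<close>).\<close>

definition tridiag_adj :: "nat \<Rightarrow> 'a \<Rightarrow> 'a \<Rightarrow> (nat \<Rightarrow> 'a) \<Rightarrow> (nat \<Rightarrow> 'a) \<Rightarrow> 'a :: comm_ring_1 mat" where
  "tridiag_adj n u l D P = mat n n (\<lambda>(i,j).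
     if i \<le> j then u ^ (j - i) * D i * P (j + 2) else l ^ (i - j) * D j * P (i + 2))"

locale tridiag_adjugate =
  fixes n :: nat and d P :: "nat \<Rightarrow> 'a :: comm_ring_1" and u l :: 'a
  assumes n_pos: "1 \<le> n"
    and P_last: "P (n+2) = 1" and P_prev: "P (n+1) = d n"
    and P_rec: "\<And>k. 2 \<le> k \<Longrightarrow> k \<le> n \<Longrightarrow> P k = d (k-1) * P (k+1) - u * l * P (k+2)"
begin

abbreviation A :: "'a mat" where "A \<equiv> tridiag (n+1) d u l"
abbreviation D :: "nat \<Rightarrow> 'a" where "D \<equiv> leading_minor A"
abbreviation C :: "'a mat" where "C \<equiv> tridiag_adj (n+1) u l D P"

lemma D_Suc: "k < n+1 \<Longrightarrow> D (Suc k) = d k * D k - (if 0 < k then u * l * D (k - 1) else 0)"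
  by (rule leading_minor_tridiag_Suc)

lemma P_Suc: "0 < k \<Longrightarrow> k \<le> n \<Longrightarrow> P (k+1) = d k * P (k+2) - (if k < n then u * l * P (k+3) else 0)"
  using P_rec[of "k+1"] P_last P_prev by (auto simp: numeral_eq_Suc)

lemma casoratian:
  assumes i: "i < n"
  shows "D (i+1) * P (i+2) - u * l * D i * P (i+3) = D (n+1)"
proof -
  have "i \<le> n - 1" using i by simp
  then show ?thesis
  proof (induction i rule: inc_induct)
    case base
    have "n - 1 + 1 = n" "n - 1 + 2 = n + 1" "n - 1 + 3 = n + 2" using i by auto
    then show ?case
      using i D_Suc[of n] P_last P_prev by (simp add: algebra_simps)
  next
    case (step i)
    have P: "P (i+2) = d (i+1) * P (i+3) - u * l * P (i+4)"
      using P_rec[of "i+2"] step.hyps by (simp add: numeral_eq_Suc)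
    have D: "D (i+2) = d (i+1) * D (i+1) - u * l * D i"
      using D_Suc[of "i+1"] step.hyps by (simp add: numeral_eq_Suc)
    have "D (i+1) * P (i+2) - u * l * D i * P (i+3)
        = (d (i+1) * D (i+1) - u * l * D i) * P (i+3) - u * l * D (i+1) * P (i+4)"
      unfolding P by (simp add: algebra_simps)
    also have "\<dots> = D (i+2) * P (i+3) - u * l * D (i+1) * P (i+4)"
      unfolding D ..
    finally show ?case using step.IH by (simp add: numeral_eq_Suc)
  qed
qed

lemma col_C_upper: "k \<le> j \<Longrightarrow> j < n+1 \<Longrightarrow> col C j $ k = u ^ (j - k) * D k * P (j+2)"
  by (simp add: tridiag_adj_def)

lemma col_C_lower: "j \<le> k \<Longrightarrow> k < n+1 \<Longrightarrow> col C j $ k = l ^ (k - j) * D j * P (k+2)"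
  by (auto simp: tridiag_adj_def)

lemma A_mult_C_nth:
  assumes i: "i < n+1" and j: "j < n+1"
  shows "(A * C) $$ (i,j) = d i * col C j $ i - (if i + 1 < n + 1 then u * col C j $ (i + 1) else 0)
      - (if 0 < i then l * col C j $ (i - 1) else 0)"
proof -
  have col: "col C j \<in> carrier_vec (n+1)" by (simp add: tridiag_adj_def carrier_vecI)
  have "(A * C) $$ (i,j) = (A *\<^sub>v col C j) $ i"
    using i j by (simp add: tridiag_adj_def)
  also have "\<dots> = d i * col C j $ i - (if i + 1 < n + 1 then u * col C j $ (i + 1) else 0)
      - (if 0 < i then l * col C j $ (i - 1) else 0)"
    by (rule tridiag_mult_vec_nth[OF col i])
  finally show ?thesis .
qed

lemma A_mult_C_above:
  assumes ij: "j = i + m + 1" and j: "j < n+1"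
  shows "(A * C) $$ (i,j) = 0"
proof -
  have i: "i < n+1" "i + 1 < n + 1" using ij j by simp_all
  have c0: "col C j $ i = u ^ Suc m * D i * P (j+2)"
    and c1: "col C j $ (i + 1) = u ^ m * D (Suc i) * P (j+2)"
    and c2: "0 < i \<Longrightarrow> col C j $ (i - 1) = u ^ Suc (Suc m) * D (i - 1) * P (j+2)"
    using ij j col_C_upper[of i j] col_C_upper[of "i + 1" j] col_C_upper[of "i - 1" j] by simp_all
  have "(A * C) $$ (i,j) = u ^ Suc m * P (j+2) * (d i * D i - (if 0 < i then u * l * D (i - 1) else 0) - D (Suc i))"
    unfolding A_mult_C_nth[OF i(1) j] using i c0 c1 c2 by (cases "0 < i") (simp_all add: algebra_simps)
  also have "\<dots> = 0" using D_Suc[OF i(1)] by simp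
  finally show ?thesis .
qed

lemma A_mult_C_diag:
  assumes i: "i < n+1"
  shows "(A * C) $$ (i,i) = D (n+1)"
proof -
  have c0: "col C i $ i = D i * P (i+2)"
    and c1: "i + 1 < n + 1 \<Longrightarrow> col C i $ (i + 1) = l * D i * P (i+3)"
    and c2: "0 < i \<Longrightarrow> col C i $ (i - 1) = u * D (i - 1) * P (i+2)"
    using i col_C_upper[of i i] col_C_lower[of i "i + 1"] col_C_upper[of "i - 1" i] by (simp_all add: numeral_eq_Suc)
  have "(A * C) $$ (i,i) = D (Suc i) * P (i+2) - (if i < n then u * l * D i * P (i+3) else 0)"
    unfolding A_mult_C_nth[OF i i] D_Suc[OF i] using c0 c1 c2
    by (cases "0 < i"; cases "i < n") (simp_all add: algebra_simps)
  also have "\<dots> = D (n+1)"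
  proof (cases "i < n")
    case True
    then show ?thesis using casoratian[OF True] by simp
  next
    case False
    with i have "i = n" by simp
    with P_last show ?thesis by simp
  qed
  finally show ?thesis .
qed

lemma A_mult_C_below:
  assumes ij: "i = j + m + 1" and i: "i < n+1"
  shows "(A * C) $$ (i,j) = 0"
proof -
  have j: "j < n+1" using ij i by simp
  have c0: "col C j $ i = l ^ Suc m * D j * P (i+2)"
    and c1: "i + 1 < n + 1 \<Longrightarrow> col C j $ (i + 1) = l ^ Suc (Suc m) * D j * P (i+3)"
    and c2: "col C j $ (i - 1) = l ^ m * D j * P (i+1)"
    using ij i col_C_lower[of j i] col_C_lower[of j "i + 1"] col_C_lower[of j "i - 1"]
    by (simp_all add: numeral_eq_Suc)
  have "(A * C) $$ (i,j) = l ^ Suc m * D j * (d i * P (i+2) - (if i < n then u * l * P (i+3) else 0) - P (i+1))"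
    unfolding A_mult_C_nth[OF i j] using ij c0 c1 c2 by (cases "i < n") (simp_all add: algebra_simps)
  also have "\<dots> = 0" using P_Suc[of i] ij i by simp
  finally show ?thesis .
qed

lemma A_mult_C: "A * C = D (n+1) \<cdot>\<^sub>m 1\<^sub>m (n+1)"
proof (rule eq_matI)
  fix i j assume "i < dim_row (D (n+1) \<cdot>\<^sub>m 1\<^sub>m (n+1))" "j < dim_col (D (n+1) \<cdot>\<^sub>m 1\<^sub>m (n+1))"
  then have i: "i < n+1" and j: "j < n+1" by simp_all
  consider (above) m where "j = i + m + 1" | (diag) "i = j" | (below) m where "i = j + m + 1"
    by (metis add.commute less_imp_Suc_add linorder_neqE_nat plus_1_eq_Suc)
  then have "(A * C) $$ (i,j) = (if i = j then D (n+1) else 0)"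
    by cases (use i j A_mult_C_above A_mult_C_diag A_mult_C_below in auto)
  then show "(A * C) $$ (i,j) = (D (n+1) \<cdot>\<^sub>m 1\<^sub>m (n+1)) $$ (i,j)"
    using i j by simp
qed (simp_all add: tridiag_adj_def)

end

section \<open>The Kac--Murdock--Szeg\<H>o matrix\<close>

definition scaled_Gamma_inv :: "nat \<Rightarrow> real \<Rightarrow> real mat" where
  "scaled_Gamma_inv N \<alpha> = tridiag (N+1) (\<lambda>i. if i = 0 \<or> i = N then 1 else 1 + \<alpha>^2) \<alpha> \<alpha>"

lemma Gamma_carrier: "Gamma N \<alpha> \<in> carrier_mat (N+1) (N+1)"
  by (simp add: Gamma_def GammaT_def)

lemma GammaT_carrier: "GammaT N \<alpha> \<in> carrier_mat (N+1) (N+1)"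
  by (simp add: GammaT_def)

lemma scaled_Gamma_inv_carrier: "scaled_Gamma_inv N \<alpha> \<in> carrier_mat (N+1) (N+1)"
  by (simp add: scaled_Gamma_inv_def tridiag_carrier)

lemma dim_Gamma [simp]:
  "dim_row (Gamma N \<alpha>) = N+1" "dim_col (Gamma N \<alpha>) = N+1"
  "dim_row (GammaT N \<alpha>) = N+1" "dim_col (GammaT N \<alpha>) = N+1"
  by (simp_all add: Gamma_def GammaT_def)

lemma GammaT_nth:
  "i < N+1 \<Longrightarrow> j < N+1 \<Longrightarrow> GammaT N \<alpha> $$ (i, j) = (if i < j then 0 else if i = j then 1/2 else \<alpha> ^ (i - j))"
  by (simp add: GammaT_def)

lemma Gamma_nth:
  "i < N+1 \<Longrightarrow> j < N+1 \<Longrightarrow> Gamma N \<alpha> $$ (i, j) = \<alpha> ^ (if i \<le> j then j - i else i - j)"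
  by (auto simp: Gamma_def GammaT_def)

lemma scaled_Gamma_inv_mult_vec_nth:
  assumes "y \<in> carrier_vec (N+1)" "i < N+1"
  shows "(scaled_Gamma_inv N \<alpha> *\<^sub>v y) $ i =
     (if i = 0 \<or> i = N then 1 else 1 + \<alpha>^2) * y $ i
     - (if i < N then \<alpha> * y $ (i + 1) else 0) - (if 0 < i then \<alpha> * y $ (i - 1) else 0)"
  unfolding scaled_Gamma_inv_def tridiag_mult_vec_nth[OF assms] by simp

lemma scaled_Gamma_inv_mult_Gamma:
  assumes N: "N \<ge> 1"
  shows "scaled_Gamma_inv N \<alpha> * Gamma N \<alpha> = (1 - \<alpha>^2) \<cdot>\<^sub>m 1\<^sub>m (N+1)"
proof (rule eq_matI)
  fix i j assume "i < dim_row ((1 - \<alpha>^2) \<cdot>\<^sub>m 1\<^sub>m (N+1))" "j < dim_col ((1 - \<alpha>^2) \<cdot>\<^sub>m 1\<^sub>m (N+1))"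
  then have i: "i < N+1" and j: "j < N+1" by auto
  have col: "col (Gamma N \<alpha>) j \<in> carrier_vec (N+1)"
    using Gamma_carrier j by (simp add: carrier_vecI)
  let ?c = "col (Gamma N \<alpha>) j"
  have "(scaled_Gamma_inv N \<alpha> * Gamma N \<alpha>) $$ (i, j) = (scaled_Gamma_inv N \<alpha> *\<^sub>v ?c) $ i"
    using i j Gamma_carrier[of N \<alpha>] by (simp add: scaled_Gamma_inv_def tridiag_def)
  also have "\<dots> = (if i = 0 \<or> i = N then 1 else 1 + \<alpha>^2) * ?c $ i
     - (if i < N then \<alpha> * ?c $ (i + 1) else 0) - (if 0 < i then \<alpha> * ?c $ (i - 1) else 0)"
    by (rule scaled_Gamma_inv_mult_vec_nth[OF col i])
  also have "\<dots> = (if i = j then 1 - \<alpha>^2 else 0)"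
  proof -
    consider (lt) m where "j = i + m + 1" | (eq) "i = j" | (gt) m where "i = j + m + 1"
      by (metis add.commute less_imp_Suc_add linorder_neqE_nat plus_1_eq_Suc)
    then show ?thesis
    proof cases
      case lt
      have "i - 1 \<le> j" "j - (i - 1) = m + 2" if "0 < i" using lt that by auto
      with lt i j show ?thesis
        by (cases "i = 0") (auto simp: Gamma_nth algebra_simps power2_eq_square)
    next
      case eq
      then show ?thesis using N i by (auto simp: Gamma_nth power2_eq_square)
    next
      case gt
      with i j show ?thesis
        by (cases "i = N") (auto simp: Gamma_nth algebra_simps power2_eq_square)
    qed
  qed
  finally show "(scaled_Gamma_inv N \<alpha> * Gamma N \<alpha>) $$ (i, j) = ((1 - \<alpha>^2) \<cdot>\<^sub>m 1\<^sub>m (N+1)) $$ (i, j)"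
    using i j by simp
qed (use Gamma_carrier[of N \<alpha>] in \<open>auto simp: scaled_Gamma_inv_def tridiag_def\<close>)

lemma Gamma_mult_Gamma_inv:
  assumes \<alpha>: "\<alpha>^2 \<noteq> 1" and N: "N \<ge> 1"
  shows "Gamma N \<alpha> * ((1 / (1 - \<alpha>^2)) \<cdot>\<^sub>m scaled_Gamma_inv N \<alpha>) = 1\<^sub>m (N+1)"
proof (rule mat_mult_left_right_inverse)
  have "(1 / (1 - \<alpha>^2)) \<cdot>\<^sub>m scaled_Gamma_inv N \<alpha> * Gamma N \<alpha>
      = (1 / (1 - \<alpha>^2)) \<cdot>\<^sub>m ((1 - \<alpha>^2) \<cdot>\<^sub>m 1\<^sub>m (N+1))"
    by (simp add: mult_smult_assoc_mat[OF scaled_Gamma_inv_carrier Gamma_carrier]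
        scaled_Gamma_inv_mult_Gamma[OF N])
  also have "\<dots> = 1\<^sub>m (N+1)"
    using \<alpha> by (auto intro!: eq_matI)
  finally show "(1 / (1 - \<alpha>^2)) \<cdot>\<^sub>m scaled_Gamma_inv N \<alpha> * Gamma N \<alpha> = 1\<^sub>m (N+1)" .
qed (use scaled_Gamma_inv_carrier Gamma_carrier in auto)

lemma Gamma_mult_scaled_Gamma_inv:
  assumes \<alpha>: "\<alpha>^2 \<noteq> 1" and N: "N \<ge> 1"
  shows "Gamma N \<alpha> * scaled_Gamma_inv N \<alpha> = (1 - \<alpha>^2) \<cdot>\<^sub>m 1\<^sub>m (N+1)"
proof (rule eq_matI)
  fix i j assume "i < dim_row ((1 - \<alpha>^2) \<cdot>\<^sub>m 1\<^sub>m (N+1))" "j < dim_col ((1 - \<alpha>^2) \<cdot>\<^sub>m 1\<^sub>m (N+1))"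
  then have i: "i < N+1" and j: "j < N+1" by simp_all
  have "(Gamma N \<alpha> * ((1 / (1 - \<alpha>^2)) \<cdot>\<^sub>m scaled_Gamma_inv N \<alpha>)) $$ (i,j)
      = 1 / (1 - \<alpha>^2) * (Gamma N \<alpha> * scaled_Gamma_inv N \<alpha>) $$ (i,j)"
    using i j scaled_Gamma_inv_carrier[of N \<alpha>] by simp
  then show "(Gamma N \<alpha> * scaled_Gamma_inv N \<alpha>) $$ (i,j) = ((1 - \<alpha>^2) \<cdot>\<^sub>m 1\<^sub>m (N+1)) $$ (i,j)"
    using i j \<alpha> by (simp add: Gamma_mult_Gamma_inv[OF \<alpha> N] field_simps split: if_splits)
qed (use scaled_Gamma_inv_carrier[of N \<alpha>] in simp_all)

lemma minv_Gamma:
  "\<alpha>^2 \<noteq> 1 \<Longrightarrow> N \<ge> 1 \<Longrightarrow> minv (N+1) (Gamma N \<alpha>) = (1 / (1 - \<alpha>^2)) \<cdot>\<^sub>m scaled_Gamma_inv N \<alpha>"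
  by (rule minv_eqI[OF Gamma_carrier _ Gamma_mult_Gamma_inv]) (use scaled_Gamma_inv_carrier in auto)

lemma scaled_Gamma_inv_quadratic_form:
  assumes N: "N \<ge> 1" and y: "y \<in> carrier_vec (N+1)"
  shows "y \<bullet> (scaled_Gamma_inv N \<alpha> *\<^sub>v y) = (1 - \<alpha>^2) * (y $ 0)^2 + (\<Sum>i<N. (y $ (i+1) - \<alpha> * y $ i)^2)"
proof -
  let ?f = "\<lambda>i. \<alpha>^2 * (y $ i)^2 - \<alpha> * y $ i * y $ (i+1)"
  let ?g = "\<lambda>i. (y $ i)^2 - \<alpha> * y $ i * y $ (i-1)"
  have entry: "y $ i * (scaled_Gamma_inv N \<alpha> *\<^sub>v y) $ i
      = (if i < N then ?f i else 0) + (if 0 < i then ?g i else 0) + (if i = 0 then (1 - \<alpha>^2) * (y $ 0)^2 else 0)"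
    if i: "i < N+1" for i
    using N i by (auto simp: scaled_Gamma_inv_mult_vec_nth[OF y i] algebra_simps power2_eq_square)
  have "y \<bullet> (scaled_Gamma_inv N \<alpha> *\<^sub>v y) = (\<Sum>i<N+1. y $ i * (scaled_Gamma_inv N \<alpha> *\<^sub>v y) $ i)"
    by (simp add: scalar_prod_def atLeast0LessThan scaled_Gamma_inv_def)
  also have "\<dots> = (\<Sum>i<N+1. if i < N then ?f i else 0) + (\<Sum>i<N+1. if 0 < i then ?g i else 0)
      + (1 - \<alpha>^2) * (y $ 0)^2"
    by (simp add: entry sum.distrib)
  also have "(\<Sum>i<N+1. if i < N then ?f i else 0) = (\<Sum>i<N. ?f i)"
    by simp
  also have "(\<Sum>i<N+1. if 0 < i then ?g i else 0) = (\<Sum>i<N. ?g (i+1))"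
    by (simp only: Suc_eq_plus1[symmetric] sum.lessThan_Suc_shift) simp
  also have "(\<Sum>i<N. ?f i) + (\<Sum>i<N. ?g (i+1)) = (\<Sum>i<N. (y $ (i+1) - \<alpha> * y $ i)^2)"
    by (simp add: sum.distrib[symmetric] algebra_simps power2_eq_square)
  finally show ?thesis by simp
qed

lemma scaled_Gamma_inv_pos_def:
  assumes \<alpha>: "\<alpha>^2 < 1" and N: "N \<ge> 1" and y: "y \<in> carrier_vec (N+1)" and y0: "y \<noteq> 0\<^sub>v (N+1)"
  shows "y \<bullet> (scaled_Gamma_inv N \<alpha> *\<^sub>v y) > 0"
proof -
  let ?Q = "(1 - \<alpha>^2) * (y $ 0)^2 + (\<Sum>i<N. (y $ (i+1) - \<alpha> * y $ i)^2)"
  have "?Q \<ge> 0" using \<alpha> by (simp add: sum_nonneg)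
  moreover have "?Q \<noteq> 0"
  proof
    assume "?Q = 0"
    then have y_0: "y $ 0 = 0" and step: "\<And>i. i < N \<Longrightarrow> y $ Suc i = \<alpha> * y $ i"
      using \<alpha> by (auto simp: add_nonneg_eq_0_iff sum_nonneg sum_nonneg_eq_0_iff)
    have "y $ i = 0" if "i < N+1" for i
      using that by (induction i) (auto simp: y_0 step)
    then have "y = 0\<^sub>v (N+1)" using y by (auto intro!: eq_vecI)
    with y0 show False ..
  qed
  ultimately show ?thesis
    by (simp add: scaled_Gamma_inv_quadratic_form[OF N y])
qed

lemma Gamma_pos_def:
  assumes \<alpha>: "\<alpha>^2 < 1" and N: "N \<ge> 1" and x: "x \<in> carrier_vec (N+1)" and x0: "x \<noteq> 0\<^sub>v (N+1)"
  shows "x \<bullet> (Gamma N \<alpha> *\<^sub>v x) > 0"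
proof -
  define y where "y = Gamma N \<alpha> *\<^sub>v x"
  have y: "y \<in> carrier_vec (N+1)" unfolding y_def by (rule mult_mat_vec_carrier[OF Gamma_carrier x])
  have "scaled_Gamma_inv N \<alpha> *\<^sub>v y = (scaled_Gamma_inv N \<alpha> * Gamma N \<alpha>) *\<^sub>v x"
    unfolding y_def by (rule assoc_mult_mat_vec[symmetric, OF scaled_Gamma_inv_carrier Gamma_carrier x])
  then have Ky: "scaled_Gamma_inv N \<alpha> *\<^sub>v y = (1 - \<alpha>^2) \<cdot>\<^sub>v x"
    using x by (auto simp: scaled_Gamma_inv_mult_Gamma[OF N])
  have "y \<noteq> 0\<^sub>v (N+1)"
  proof
    assume y_0: "y = 0\<^sub>v (N+1)"
    have "(scaled_Gamma_inv N \<alpha> *\<^sub>v y) $ i = 0" if "i < N+1" for i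
      unfolding scaled_Gamma_inv_mult_vec_nth[OF y that] using that y_0 by (simp cong: if_cong)
    then have "(1 - \<alpha>^2) * x $ i = 0" if "i < N+1" for i
      using that x by (simp add: Ky)
    then have "x = 0\<^sub>v (N+1)"
      using x \<alpha> by (auto intro!: eq_vecI)
    with x0 show False ..
  qed
  then have "y \<bullet> (scaled_Gamma_inv N \<alpha> *\<^sub>v y) > 0"
    by (rule scaled_Gamma_inv_pos_def[OF \<alpha> N y])
  moreover have "y \<bullet> (scaled_Gamma_inv N \<alpha> *\<^sub>v y) = (1 - \<alpha>^2) * (x \<bullet> y)"
    using Ky comm_scalar_prod[OF x y] x y by simp
  ultimately show ?thesis
    using \<alpha> by (simp add: y_def zero_less_mult_iff)
qed

lemma quadratic_form_Gamma_eq: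
  assumes x: "x \<in> carrier_vec (N+1)"
  shows "x \<bullet> (Gamma N \<alpha> *\<^sub>v x) = 2 * (x \<bullet> (GammaT N \<alpha> *\<^sub>v x))"
proof -
  have GT: "GammaT N \<alpha> \<in> carrier_mat (N+1) (N+1)" by (rule GammaT_carrier)
  have "(GammaT N \<alpha>)\<^sup>T *\<^sub>v x \<in> carrier_vec (N+1)"
    using GT x by (auto intro: mult_mat_vec_carrier)
  then have "x \<bullet> ((GammaT N \<alpha>)\<^sup>T *\<^sub>v x) = x \<bullet> (GammaT N \<alpha> *\<^sub>v x)"
    using comm_scalar_prod[OF x] transpose_vec_mult_scalar[OF GT x x] by simp
  then show ?thesis
    using GT x by (simp add: Gamma_def quadratic_form_add[OF GT _ x])
qed

lemma Gamma_plus_GammaT_pos_def: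
  assumes \<alpha>: "\<alpha>^2 < 1" and N: "N \<ge> 1" and \<theta>: "\<theta> \<ge> 0"
    and x: "x \<in> carrier_vec (N+1)" and x0: "x \<noteq> 0\<^sub>v (N+1)"
  shows "x \<bullet> ((Gamma N \<alpha> + GammaT N \<alpha> + (2 * \<theta>) \<cdot>\<^sub>m 1\<^sub>m (N+1)) *\<^sub>v x) > 0"
proof -
  have "x \<bullet> x \<ge> 0" by (simp add: scalar_prod_def sum_nonneg)
  moreover have "(2 * \<theta>) \<cdot>\<^sub>m 1\<^sub>m (N+1) *\<^sub>v x = (2 * \<theta>) \<cdot>\<^sub>v x"
    using x by auto
  ultimately have "x \<bullet> ((2 * \<theta>) \<cdot>\<^sub>m 1\<^sub>m (N+1) *\<^sub>v x) \<ge> 0"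
    using x \<theta> by simp
  moreover have "x \<bullet> (Gamma N \<alpha> *\<^sub>v x) > 0" by (rule Gamma_pos_def[OF \<alpha> N x x0])
  ultimately show ?thesis
    using quadratic_form_Gamma_eq[OF x, of \<alpha>] Gamma_carrier[of N \<alpha>] GammaT_carrier[of N \<alpha>]
    by (simp add: quadratic_form_add[OF _ _ x] add_carrier_mat[of _ "N+1" "N+1"])
qed

section \<open>The systems for \<open>\<nu>\<close> and \<open>\<omega>\<close>\<close>

locale gamma_setting =
  fixes N :: nat and \<alpha> \<theta> :: real
  assumes \<alpha>_pos: "0 < \<alpha>" and \<alpha>_less_one: "\<alpha> < 1" and \<theta>_nonneg: "0 \<le> \<theta>" and N_ge_2: "2 \<le> N"
begin

abbreviation \<kappa> :: real where "\<kappa> \<equiv> 2 * \<theta> + 1/2"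

abbreviation Tmat :: "real mat" where "Tmat \<equiv> GammaT N \<alpha> + (2 * \<theta>) \<cdot>\<^sub>m 1\<^sub>m (N+1)"

definition B_diag :: "nat \<Rightarrow> real" where
  "B_diag i = (if i = 0 then 1 - 2 * \<alpha>^2 + \<kappa> else if i = N then 1 - \<alpha>^2 + \<kappa> else 1 + \<alpha>^2 * (\<kappa> - 2) + \<kappa>)"

lemma N_pos: "1 \<le> N"
  using N_ge_2 by simp

lemma \<alpha>_sq_less_one: "\<alpha>^2 < 1"
  using \<alpha>_pos \<alpha>_less_one by (simp add: power_less_one_iff)

lemma \<alpha>_sq_ne_one: "\<alpha>^2 \<noteq> 1"
  using \<alpha>_sq_less_one by simp

lemma Bmat_nth:
  assumes i: "i < N+1" and j: "j < N+1"
  shows "Bmat N \<alpha> \<theta> $$ (i,j) = (if i = j then 1 - \<alpha>^2 else 0)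
      + (if i = 0 \<or> i = N then 1 else 1 + \<alpha>^2) * col Tmat j $ i
      - (if i < N then \<alpha> * col Tmat j $ (i + 1) else 0) - (if 0 < i then \<alpha> * col Tmat j $ (i - 1) else 0)"
proof -
  have c: "1 - \<alpha>^2 \<noteq> 0" using \<alpha>_sq_ne_one by simp
  have col: "col Tmat j \<in> carrier_vec (N+1)" by (simp add: carrier_vecI)
  have "Bmat N \<alpha> \<theta> $$ (i,j)
      = (1 - \<alpha>^2) * ((if i = j then 1 else 0) + 1 / (1 - \<alpha>^2) * (scaled_Gamma_inv N \<alpha> *\<^sub>v col Tmat j) $ i)"
    unfolding Bmat_def minv_Gamma[OF \<alpha>_sq_ne_one N_pos]
    using i j scaled_Gamma_inv_carrier[of N \<alpha>] by simp
  also have "\<dots> = (if i = j then 1 - \<alpha>^2 else 0) + (scaled_Gamma_inv N \<alpha> *\<^sub>v col Tmat j) $ i"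
    using c by (simp add: distrib_left)
  finally show ?thesis
    unfolding scaled_Gamma_inv_mult_vec_nth[OF col i] by simp
qed

lemma Bmat_eq_tridiag: "Bmat N \<alpha> \<theta> = tridiag (N+1) B_diag (\<alpha> * \<kappa>) (\<alpha> * (\<kappa> - 1))"
proof (rule eq_matI)
  fix i j assume "i < dim_row (tridiag (N+1) B_diag (\<alpha> * \<kappa>) (\<alpha> * (\<kappa> - 1)))"
    "j < dim_col (tridiag (N+1) B_diag (\<alpha> * \<kappa>) (\<alpha> * (\<kappa> - 1)))"
  then have i: "i < N+1" and j: "j < N+1" by simp_all
  show "Bmat N \<alpha> \<theta> $$ (i,j) = tridiag (N+1) B_diag (\<alpha> * \<kappa>) (\<alpha> * (\<kappa> - 1)) $$ (i,j)"
  proof -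
    have "i + 1 < j \<or> j = i + 1 \<or> i = j \<or> i = j + 1 \<or> j + 2 \<le> i" by linarith
    then consider (above) "i + 1 < j" | (super) "j = i + 1" | (diag) "i = j" | (sub) "i = j + 1"
      | (below) "j + 2 \<le> i"
      by blast
    then show ?thesis
    proof cases
      case above
      show ?thesis unfolding Bmat_nth[OF i j] using above i j by (auto simp: GammaT_nth tridiag_nth)
    next
      case super
      show ?thesis unfolding Bmat_nth[OF i j] using super i j by (auto simp: GammaT_nth tridiag_nth)
    next
      case diag
      show ?thesis unfolding Bmat_nth[OF i j] using diag i j N_pos
        by (auto simp: GammaT_nth tridiag_nth B_diag_def field_simps power2_eq_square)
    next
      case sub
      show ?thesis unfolding Bmat_nth[OF i j] using sub i j N_pos
        by (auto simp: GammaT_nth tridiag_nth B_diag_def algebra_simps power2_eq_square)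
    next
      case below
      define e where "e = i - j - 2"
      have below: "i = j + e + 2" using below by (simp add: e_def)
      show ?thesis unfolding Bmat_nth[OF i j] using below i
        by (cases "i = N") (auto simp: GammaT_nth tridiag_nth algebra_simps numeral_eq_Suc)
    qed
  qed
qed (simp_all add: Bmat_def minv_Gamma[OF \<alpha>_sq_ne_one N_pos, simplified] scaled_Gamma_inv_def)

lemma delta_eq_leading_minor: "delta N \<alpha> \<theta> = leading_minor (tridiag (N+1) B_diag (\<alpha> * \<kappa>) (\<alpha> * (\<kappa> - 1)))"
  by (rule ext) (simp add: delta_def leading_minor_def Bmat_eq_tridiag)

lemma delta_0: "delta N \<alpha> \<theta> 0 = 1"
  by (simp add: delta_def)

lemma phi_last: "phi N \<alpha> \<kappa> (N+2) = 1"
  by (simp add: phi_def)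

lemma phi_prev: "phi N \<alpha> \<kappa> (N+1) = B_diag N"
  using N_pos by (simp add: phi_def B_diag_def)

lemma phi_rec:
  assumes "2 \<le> k" "k \<le> N"
  shows "phi N \<alpha> \<kappa> k = B_diag (k-1) * phi N \<alpha> \<kappa> (k+1) - \<alpha> * \<kappa> * (\<alpha> * (\<kappa> - 1)) * phi N \<alpha> \<kappa> (k+2)"
proof -
  have "N + 2 - k = Suc (Suc (N - k))" "N + 2 - (k+1) = Suc (N - k)" "N + 2 - (k+2) = N - k"
    using assms by auto
  moreover have "k - 1 \<noteq> 0" "k - 1 \<noteq> N" using assms by auto
  ultimately show ?thesis
    by (simp add: phi_def B_diag_def power2_eq_square algebra_simps)
qed

definition adjB :: "real mat" where
  "adjB = tridiag_adj (N+1) (\<alpha> * \<kappa>) (\<alpha> * (\<kappa> - 1)) (delta N \<alpha> \<theta>) (phi N \<alpha> \<kappa>)"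

lemma adjB_carrier: "adjB \<in> carrier_mat (N+1) (N+1)"
  by (simp add: adjB_def tridiag_adj_def)

lemma adjB_nth_le:
  "i \<le> j \<Longrightarrow> j < N+1 \<Longrightarrow> adjB $$ (i,j) = (\<alpha> * \<kappa>) ^ (j - i) * delta N \<alpha> \<theta> i * phi N \<alpha> \<kappa> (j+2)"
  by (simp add: adjB_def tridiag_adj_def)

lemma adjB_nth_gt:
  "j < i \<Longrightarrow> i < N+1 \<Longrightarrow> adjB $$ (i,j) = (\<alpha> * (\<kappa> - 1)) ^ (i - j) * delta N \<alpha> \<theta> j * phi N \<alpha> \<kappa> (i+2)"
  by (simp add: adjB_def tridiag_adj_def)

lemma Bmat_mult_adjB: "Bmat N \<alpha> \<theta> * adjB = delta N \<alpha> \<theta> (N+1) \<cdot>\<^sub>m 1\<^sub>m (N+1)"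
proof -
  interpret tridiag_adjugate N B_diag "phi N \<alpha> \<kappa>" "\<alpha> * \<kappa>" "\<alpha> * (\<kappa> - 1)"
    by unfold_locales (fact N_pos phi_last phi_prev phi_rec)+
  show ?thesis
    unfolding adjB_def Bmat_eq_tridiag delta_eq_leading_minor by (rule A_mult_C)
qed

abbreviation Mnu :: "real mat" where "Mnu \<equiv> Gamma N \<alpha> + GammaT N \<alpha> + (2 * \<theta>) \<cdot>\<^sub>m 1\<^sub>m (N+1)"

abbreviation Gamma_inv :: "real mat" where
  "Gamma_inv \<equiv> (1 / (1 - \<alpha>^2)) \<cdot>\<^sub>m scaled_Gamma_inv N \<alpha>"

lemma Mnu_carrier: "Mnu \<in> carrier_mat (N+1) (N+1)"
  using Gamma_carrier[of N \<alpha>] GammaT_carrier[of N \<alpha>] by auto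

lemma Gamma_inv_carrier: "Gamma_inv \<in> carrier_mat (N+1) (N+1)"
  using scaled_Gamma_inv_carrier by simp

lemma Bmat_carrier: "Bmat N \<alpha> \<theta> \<in> carrier_mat (N+1) (N+1)"
  using Bmat_eq_tridiag tridiag_carrier by simp

lemma Gamma_mult_Bmat: "Gamma N \<alpha> * Bmat N \<alpha> \<theta> = (1 - \<alpha>^2) \<cdot>\<^sub>m Mnu"
proof -
  have G: "Gamma N \<alpha> \<in> carrier_mat (N+1) (N+1)" by (rule Gamma_carrier)
  have T: "Tmat \<in> carrier_mat (N+1) (N+1)" using GammaT_carrier[of N \<alpha>] by simp
  have GT: "Gamma_inv * Tmat \<in> carrier_mat (N+1) (N+1)" using Gamma_inv_carrier T by simp
  have "Gamma N \<alpha> * Bmat N \<alpha> \<theta> = (1 - \<alpha>^2) \<cdot>\<^sub>m (Gamma N \<alpha> * (1\<^sub>m (N+1) + Gamma_inv * Tmat))"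
    unfolding Bmat_def minv_Gamma[OF \<alpha>_sq_ne_one N_pos]
    by (rule mult_smult_distrib[OF G]) (use GT in \<open>auto intro: add_carrier_mat\<close>)
  also have "Gamma N \<alpha> * (1\<^sub>m (N+1) + Gamma_inv * Tmat) = Gamma N \<alpha> * 1\<^sub>m (N+1) + Gamma N \<alpha> * (Gamma_inv * Tmat)"
    by (rule mult_add_distrib_mat[OF G one_carrier_mat GT])
  also have "\<dots> = Gamma N \<alpha> + (Gamma N \<alpha> * Gamma_inv) * Tmat"
    by (simp only: right_mult_one_mat[OF G] assoc_mult_mat[OF G Gamma_inv_carrier T])
  also have "\<dots> = Mnu"
    using G T GammaT_carrier[of N \<alpha>] by (simp add: Gamma_mult_Gamma_inv[OF \<alpha>_sq_ne_one N_pos])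
  finally show ?thesis .
qed

lemma det_Mnu_nonzero: "det Mnu \<noteq> 0"
  by (rule det_nonzero_if_pos_def[OF Mnu_carrier])
    (rule Gamma_plus_GammaT_pos_def[OF \<alpha>_sq_less_one N_pos \<theta>_nonneg])

lemma delta_last_eq_det: "delta N \<alpha> \<theta> (N+1) = det (Bmat N \<alpha> \<theta>)"
proof -
  have "mat (N+1) (N+1) (\<lambda>(i,j). Bmat N \<alpha> \<theta> $$ (i,j)) = Bmat N \<alpha> \<theta>"
    using Bmat_carrier by (auto intro!: eq_matI)
  then show ?thesis by (simp add: delta_def)
qed

lemma delta_last_nonzero: "delta N \<alpha> \<theta> (N+1) \<noteq> 0"
proof
  assume "delta N \<alpha> \<theta> (N+1) = 0"
  then have "det (Gamma N \<alpha> * Bmat N \<alpha> \<theta>) = 0"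
    using det_mult[OF Gamma_carrier Bmat_carrier] delta_last_eq_det by simp
  then have "(1 - \<alpha>^2) ^ (N+1) * det Mnu = 0"
    using Mnu_carrier by (simp add: Gamma_mult_Bmat)
  then show False
    using det_Mnu_nonzero \<alpha>_sq_ne_one by simp
qed

definition B_rhs :: "real vec" where
  "B_rhs = scaled_Gamma_inv N \<alpha> *\<^sub>v vec (N+1) (\<lambda>_. 1)"

lemma B_rhs_carrier: "B_rhs \<in> carrier_vec (N+1)"
  unfolding B_rhs_def by (rule mult_mat_vec_carrier[OF scaled_Gamma_inv_carrier]) simp

lemma B_rhs_nth:
  assumes j: "j < N+1"
  shows "B_rhs $ j = (if j = 0 \<or> j = N then 1 - \<alpha> else (1 - \<alpha>)^2)"
proof -
  let ?one = "vec (N+1) (\<lambda>_. 1) :: real vec"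
  have "B_rhs $ j = (if j = 0 \<or> j = N then 1 else 1 + \<alpha>^2) * ?one $ j
      - (if j < N then \<alpha> * ?one $ (j + 1) else 0) - (if 0 < j then \<alpha> * ?one $ (j - 1) else 0)"
    unfolding B_rhs_def by (rule scaled_Gamma_inv_mult_vec_nth[OF _ j]) simp
  also have "\<dots> = (if j = 0 \<or> j = N then 1 else 1 + \<alpha>^2) - (if j < N then \<alpha> else 0) - (if 0 < j then \<alpha> else 0)"
    using j by (simp cong: if_cong)
  finally show ?thesis
    using j N_pos by (auto simp: power2_eq_square algebra_simps)
qed

lemma nu_vec_eq: "nu_vec N \<alpha> \<theta> = (1 / delta N \<alpha> \<theta> (N+1)) \<cdot>\<^sub>v (adjB *\<^sub>v B_rhs)"
proof -
  define x where "x = (1 / delta N \<alpha> \<theta> (N+1)) \<cdot>\<^sub>v (adjB *\<^sub>v B_rhs)"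
  let ?one = "vec (N+1) (\<lambda>_. 1) :: real vec"
  have adjB_rhs: "adjB *\<^sub>v B_rhs \<in> carrier_vec (N+1)"
    by (rule mult_mat_vec_carrier[OF adjB_carrier B_rhs_carrier])
  have x: "x \<in> carrier_vec (N+1)"
    unfolding x_def using adjB_rhs by simp
  have "Bmat N \<alpha> \<theta> *\<^sub>v x = (1 / delta N \<alpha> \<theta> (N+1)) \<cdot>\<^sub>v ((Bmat N \<alpha> \<theta> * adjB) *\<^sub>v B_rhs)"
    unfolding x_def mult_mat_vec[OF Bmat_carrier adjB_rhs] assoc_mult_mat_vec[OF Bmat_carrier adjB_carrier B_rhs_carrier] ..
  also have "\<dots> = (1 / delta N \<alpha> \<theta> (N+1) * delta N \<alpha> \<theta> (N+1)) \<cdot>\<^sub>v B_rhs"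
    unfolding Bmat_mult_adjB smult_mat_mult_vec[OF one_carrier_mat B_rhs_carrier] smult_smult_assoc
    using B_rhs_carrier by simp
  finally have Bx: "Bmat N \<alpha> \<theta> *\<^sub>v x = B_rhs"
    using delta_last_nonzero by simp
  have "(1 - \<alpha>^2) \<cdot>\<^sub>v (Mnu *\<^sub>v x) = Gamma N \<alpha> *\<^sub>v (Bmat N \<alpha> \<theta> *\<^sub>v x)"
    unfolding smult_mat_mult_vec[OF Mnu_carrier x, symmetric] Gamma_mult_Bmat[symmetric]
    by (rule assoc_mult_mat_vec[OF Gamma_carrier Bmat_carrier x])
  also have "\<dots> = (Gamma N \<alpha> * scaled_Gamma_inv N \<alpha>) *\<^sub>v ?one"
    unfolding Bx B_rhs_def by (rule assoc_mult_mat_vec[symmetric, OF Gamma_carrier scaled_Gamma_inv_carrier]) simp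
  also have "\<dots> = (1 - \<alpha>^2) \<cdot>\<^sub>v ?one"
    unfolding Gamma_mult_scaled_Gamma_inv[OF \<alpha>_sq_ne_one N_pos]
    by (subst smult_mat_mult_vec[OF one_carrier_mat]) simp_all
  finally have "(1 / (1 - \<alpha>^2)) \<cdot>\<^sub>v ((1 - \<alpha>^2) \<cdot>\<^sub>v (Mnu *\<^sub>v x)) = (1 / (1 - \<alpha>^2)) \<cdot>\<^sub>v ((1 - \<alpha>^2) \<cdot>\<^sub>v ?one)"
    by simp
  then have "Mnu *\<^sub>v x = ?one"
    unfolding smult_smult_assoc using \<alpha>_sq_ne_one by simp
  then show ?thesis
    unfolding nu_vec_def x_def[symmetric] by (rule minv_mult_vec_eqI[OF Mnu_carrier det_Mnu_nonzero x])
qed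

lemma nu_eq_sum:
  assumes i: "i < N+1"
  shows "nu N \<alpha> \<theta> (i+1) = 1 / delta N \<alpha> \<theta> (N+1) *
    (adjB $$ (i,0) * B_rhs $ 0 + (\<Sum>j=2..N. adjB $$ (i,j-1) * B_rhs $ (j-1)) + adjB $$ (i,N) * B_rhs $ N)"
proof -
  have "nu N \<alpha> \<theta> (i+1) = 1 / delta N \<alpha> \<theta> (N+1) * (adjB *\<^sub>v B_rhs) $ i"
    unfolding nu_def nu_vec_eq using i adjB_carrier by simp
  also have "(adjB *\<^sub>v B_rhs) $ i = (\<Sum>j<N+1. adjB $$ (i,j) * B_rhs $ j)"
    by (rule mult_mat_vec_nth_sum[OF adjB_carrier B_rhs_carrier i])
  finally show ?thesis
    unfolding sum_lessThan_Suc_split_ends[OF N_ge_2] .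
qed

lemma nu_first:
  "nu N \<alpha> \<theta> 1 = (1 - \<alpha>) / delta N \<alpha> \<theta> (N+1) *
     (phi N \<alpha> \<kappa> 2 + (1 - \<alpha>) * (\<Sum>j=2..N. (\<alpha> * \<kappa>) ^ (j - 1) * phi N \<alpha> \<kappa> (j+1)) + (\<alpha> * \<kappa>) ^ N)"
proof -
  have middle: "(\<Sum>j=2..N. adjB $$ (0,j-1) * B_rhs $ (j-1))
      = (1 - \<alpha>)^2 * (\<Sum>j=2..N. (\<alpha> * \<kappa>) ^ (j - 1) * phi N \<alpha> \<kappa> (j+1))"
    unfolding sum_distrib_left
  proof (rule sum.cong[OF refl])
    fix j assume j: "j \<in> {2..N}"
    then have "j - 1 + 2 = j + 1" by auto
    with j show "adjB $$ (0,j-1) * B_rhs $ (j-1) = (1 - \<alpha>)^2 * ((\<alpha> * \<kappa>) ^ (j - 1) * phi N \<alpha> \<kappa> (j+1))"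
      by (auto simp: adjB_nth_le B_rhs_nth delta_0)
  qed
  have first: "adjB $$ (0,0) * B_rhs $ 0 = (1 - \<alpha>) * phi N \<alpha> \<kappa> 2"
    by (simp add: adjB_nth_le B_rhs_nth delta_0 numeral_2_eq_2)
  have "adjB $$ (0,N) = (\<alpha> * \<kappa>) ^ (N - 0) * delta N \<alpha> \<theta> 0 * phi N \<alpha> \<kappa> (N+2)"
    by (rule adjB_nth_le) simp_all
  then have "adjB $$ (0,N) = (\<alpha> * \<kappa>) ^ N"
    unfolding delta_0 phi_last by simp
  then have last: "adjB $$ (0,N) * B_rhs $ N = (1 - \<alpha>) * (\<alpha> * \<kappa>) ^ N"
    by (simp add: B_rhs_nth)
  show ?thesis
    using nu_eq_sum[of 0] unfolding first middle last common_factor3 by simp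
qed


lemma nu_last:
  "nu N \<alpha> \<theta> (N+1) = (1 - \<alpha>) / delta N \<alpha> \<theta> (N+1) *
     ((\<alpha> * (\<kappa> - 1)) ^ N + (1 - \<alpha>) * (\<Sum>j=2..N. (\<alpha> * (\<kappa> - 1)) ^ (N + 1 - j) * delta N \<alpha> \<theta> (j - 1))
      + delta N \<alpha> \<theta> N)"
proof -
  have "adjB $$ (N,0) = (\<alpha> * (\<kappa> - 1)) ^ (N - 0) * delta N \<alpha> \<theta> 0 * phi N \<alpha> \<kappa> (N+2)"
    by (rule adjB_nth_gt) (use N_pos in simp_all)
  then have first: "adjB $$ (N,0) * B_rhs $ 0 = (1 - \<alpha>) * (\<alpha> * (\<kappa> - 1)) ^ N"
    unfolding delta_0 phi_last by (simp add: B_rhs_nth)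
  have "adjB $$ (N,N) = (\<alpha> * \<kappa>) ^ (N - N) * delta N \<alpha> \<theta> N * phi N \<alpha> \<kappa> (N+2)"
    by (rule adjB_nth_le) simp_all
  then have last: "adjB $$ (N,N) * B_rhs $ N = (1 - \<alpha>) * delta N \<alpha> \<theta> N"
    unfolding phi_last by (simp add: B_rhs_nth)
  have middle: "(\<Sum>j=2..N. adjB $$ (N,j-1) * B_rhs $ (j-1))
      = (1 - \<alpha>)^2 * (\<Sum>j=2..N. (\<alpha> * (\<kappa> - 1)) ^ (N + 1 - j) * delta N \<alpha> \<theta> (j - 1))"
    unfolding sum_distrib_left
  proof (rule sum.cong[OF refl])
    fix j assume j: "j \<in> {2..N}"
    have "adjB $$ (N,j-1) = (\<alpha> * (\<kappa> - 1)) ^ (N - (j - 1)) * delta N \<alpha> \<theta> (j - 1) * phi N \<alpha> \<kappa> (N+2)"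
      by (rule adjB_nth_gt) (use j in auto)
    moreover have "N - (j - 1) = N + 1 - j" "j - 1 \<noteq> 0" "j - 1 \<noteq> N" "j - 1 < N + 1"
      using j by auto
    ultimately show "adjB $$ (N,j-1) * B_rhs $ (j-1)
        = (1 - \<alpha>)^2 * ((\<alpha> * (\<kappa> - 1)) ^ (N + 1 - j) * delta N \<alpha> \<theta> (j - 1))"
      unfolding phi_last by (simp add: B_rhs_nth)
  qed
  show ?thesis
    using nu_eq_sum[of N] unfolding first middle last common_factor3 by simp
qed

lemma adjB_row_sum_before_diag:
  assumes i: "i \<in> {2..N}"
  shows "(\<Sum>j=2..i-1. adjB $$ (i-1,j-1) * B_rhs $ (j-1))
      = (1 - \<alpha>)^2 * (\<Sum>j=2..i-1. (\<alpha> * (\<kappa> - 1)) ^ (i - j) * delta N \<alpha> \<theta> (j - 1) * phi N \<alpha> \<kappa> (i+1))"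
  unfolding sum_distrib_left
proof (rule sum.cong[OF refl])
  fix j assume j: "j \<in> {2..i-1}"
  have "adjB $$ (i-1,j-1) = (\<alpha> * (\<kappa> - 1)) ^ (i - 1 - (j - 1)) * delta N \<alpha> \<theta> (j - 1) * phi N \<alpha> \<kappa> (i - 1 + 2)"
    by (rule adjB_nth_gt) (use i j in auto)
  moreover have "i - 1 - (j - 1) = i - j" "i - 1 + 2 = i + 1" "j - 1 \<noteq> 0" "j - 1 \<noteq> N" "j - 1 < N + 1"
    using i j by auto
  ultimately show "adjB $$ (i-1,j-1) * B_rhs $ (j-1)
      = (1 - \<alpha>)^2 * ((\<alpha> * (\<kappa> - 1)) ^ (i - j) * delta N \<alpha> \<theta> (j - 1) * phi N \<alpha> \<kappa> (i+1))"
    by (simp add: B_rhs_nth)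
qed

lemma adjB_row_sum_from_diag:
  assumes i: "i \<in> {2..N}"
  shows "(\<Sum>j=i..N. adjB $$ (i-1,j-1) * B_rhs $ (j-1))
      = (1 - \<alpha>)^2 * (\<Sum>j=i..N. (\<alpha> * \<kappa>) ^ (j - i) * delta N \<alpha> \<theta> (i - 1) * phi N \<alpha> \<kappa> (j+1))"
  unfolding sum_distrib_left
proof (rule sum.cong[OF refl])
  fix j assume j: "j \<in> {i..N}"
  have "adjB $$ (i-1,j-1) = (\<alpha> * \<kappa>) ^ (j - 1 - (i - 1)) * delta N \<alpha> \<theta> (i - 1) * phi N \<alpha> \<kappa> (j - 1 + 2)"
    by (rule adjB_nth_le) (use i j in auto)
  moreover have "j - 1 - (i - 1) = j - i" "j - 1 + 2 = j + 1" "j - 1 \<noteq> 0" "j - 1 \<noteq> N" "j - 1 < N + 1"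
    using i j by auto
  ultimately show "adjB $$ (i-1,j-1) * B_rhs $ (j-1)
      = (1 - \<alpha>)^2 * ((\<alpha> * \<kappa>) ^ (j - i) * delta N \<alpha> \<theta> (i - 1) * phi N \<alpha> \<kappa> (j+1))"
    by (simp add: B_rhs_nth)
qed

lemma nu_middle:
  assumes i: "i \<in> {2..N}"
  shows "nu N \<alpha> \<theta> i = (1 - \<alpha>) / delta N \<alpha> \<theta> (N+1) *
    ((\<alpha> * (\<kappa> - 1)) ^ (i - 1) * phi N \<alpha> \<kappa> (i+1)
     + (1 - \<alpha>) * (\<Sum>j=2..i-1. (\<alpha> * (\<kappa> - 1)) ^ (i - j) * delta N \<alpha> \<theta> (j - 1) * phi N \<alpha> \<kappa> (i+1))
     + (1 - \<alpha>) * (\<Sum>j=i..N. (\<alpha> * \<kappa>) ^ (j - i) * delta N \<alpha> \<theta> (i - 1) * phi N \<alpha> \<kappa> (j+1))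
     + (\<alpha> * \<kappa>) ^ (N + 1 - i) * delta N \<alpha> \<theta> (i - 1))"
proof -
  have "adjB $$ (i-1,0) = (\<alpha> * (\<kappa> - 1)) ^ (i - 1 - 0) * delta N \<alpha> \<theta> 0 * phi N \<alpha> \<kappa> (i - 1 + 2)"
    by (rule adjB_nth_gt) (use i in auto)
  then have first: "adjB $$ (i-1,0) * B_rhs $ 0 = (1 - \<alpha>) * ((\<alpha> * (\<kappa> - 1)) ^ (i - 1) * phi N \<alpha> \<kappa> (i+1))"
    unfolding delta_0 using i by (simp add: B_rhs_nth)
  have "adjB $$ (i-1,N) = (\<alpha> * \<kappa>) ^ (N - (i - 1)) * delta N \<alpha> \<theta> (i - 1) * phi N \<alpha> \<kappa> (N+2)"
    by (rule adjB_nth_le) (use i in auto)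
  then have last: "adjB $$ (i-1,N) * B_rhs $ N = (1 - \<alpha>) * ((\<alpha> * \<kappa>) ^ (N + 1 - i) * delta N \<alpha> \<theta> (i - 1))"
    unfolding phi_last using i by (simp add: B_rhs_nth Suc_diff_le)
  have split: "(\<Sum>j=2..N. adjB $$ (i-1,j-1) * B_rhs $ (j-1))
      = (\<Sum>j=2..i-1. adjB $$ (i-1,j-1) * B_rhs $ (j-1)) + (\<Sum>j=i..N. adjB $$ (i-1,j-1) * B_rhs $ (j-1))"
    by (rule sum_atLeastAtMost_split) (use i in auto)
  have row: "i - 1 < N+1" using i by auto
  show ?thesis
    using nu_eq_sum[OF row] i
    unfolding first split adjB_row_sum_before_diag[OF i] adjB_row_sum_from_diag[OF i] last common_factor4
    by simp
qed

definition Momega :: "real mat" where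
  "Momega = Gamma N \<alpha> - GammaT N \<alpha> + (2 * \<theta>) \<cdot>\<^sub>m 1\<^sub>m (N+1)"

definition omega_sol :: "nat \<Rightarrow> real" where
  "omega_sol i = ((1 - \<alpha>) * \<kappa> + \<alpha> * (\<alpha> * (\<kappa> - 1) / \<kappa>) ^ (N - i)) / (\<kappa> * (\<kappa> - \<alpha> * (\<kappa> - 1)))"

definition omega_tail :: "nat \<Rightarrow> real" where
  "omega_tail i = (\<Sum>k = i..<N+1. \<alpha> ^ (k - i) * omega_sol k)"

lemma \<kappa>_pos: "0 < \<kappa>"
  using \<theta>_nonneg by simp

lemma omega_denom_pos: "0 < \<kappa> * (\<kappa> - \<alpha> * (\<kappa> - 1))"
proof -
  have "\<kappa> - \<alpha> * (\<kappa> - 1) = (1 - \<alpha>) * \<kappa> + \<alpha>" by (simp add: field_simps)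
  also have "\<dots> > 0" using \<kappa>_pos \<alpha>_pos \<alpha>_less_one by (simp add: add_pos_pos)
  finally show ?thesis using \<kappa>_pos by simp
qed

lemma omega_sol_last: "omega_sol N = 1 / \<kappa>"
  using \<kappa>_pos omega_denom_pos by (simp add: omega_sol_def field_simps)

lemma Momega_carrier: "Momega \<in> carrier_mat (N+1) (N+1)"
  using Gamma_carrier[of N \<alpha>] GammaT_carrier[of N \<alpha>] by (auto simp: Momega_def)

lemma Momega_nth:
  "i < N+1 \<Longrightarrow> j < N+1 \<Longrightarrow> Momega $$ (i,j) = (if j < i then 0 else if i = j then \<kappa> else \<alpha> ^ (j - i))"
  by (auto simp: Momega_def Gamma_nth GammaT_nth)

lemma det_Momega_nonzero: "det Momega \<noteq> 0"
proof -
  have "upper_triangular Momega"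
    unfolding upper_triangular_def
  proof (intro allI impI)
    fix i j assume "i < dim_row Momega" "j < i"
    then show "Momega $$ (i,j) = 0" using Momega_carrier by (subst Momega_nth) auto
  qed
  then have "det Momega = prod_list (diag_mat Momega)"
    by (rule det_upper_triangular[OF _ Momega_carrier])
  also have "\<dots> = (\<Prod>i = 0..<N+1. Momega $$ (i,i))"
    unfolding prod_list_diag_prod using Momega_carrier by simp
  also have "\<dots> = \<kappa> ^ (N+1)"
    by (subst prod.cong[OF refl Momega_nth]) auto
  finally show ?thesis using \<kappa>_pos by simp
qed

lemma omega_tail_Suc: "i < N+1 \<Longrightarrow> omega_tail i = omega_sol i + \<alpha> * omega_tail (i+1)"
proof -
  assume i: "i < N+1"
  have "omega_tail i = omega_sol i + (\<Sum>k = Suc i..<N+1. \<alpha> ^ (k - i) * omega_sol k)"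
    unfolding omega_tail_def sum.atLeast_Suc_lessThan[OF i] by simp
  also have "(\<Sum>k = Suc i..<N+1. \<alpha> ^ (k - i) * omega_sol k) = \<alpha> * omega_tail (i+1)"
    unfolding omega_tail_def sum_distrib_left
  proof (rule sum.cong)
    fix k assume "k \<in> {i+1..<N+1}"
    then have "k - i = Suc (k - (i+1))" by auto
    then show "\<alpha> ^ (k - i) * omega_sol k = \<alpha> * (\<alpha> ^ (k - (i+1)) * omega_sol k)" by simp
  qed simp
  finally show ?thesis .
qed

lemma omega_tail_eq: "i \<le> N \<Longrightarrow> omega_tail i = 1 + (1 - \<kappa>) * omega_sol i"
proof (induction i rule: inc_induct)
  case base
  have "omega_tail (N+1) = 0" by (simp add: omega_tail_def)
  then have tail: "omega_tail N = omega_sol N"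
    using omega_tail_Suc[of N] by simp
  have "\<kappa> * omega_sol N = 1"
    using omega_sol_last \<kappa>_pos by simp
  moreover have "w = 1 + (1 - k) * w" if "k * w = 1" for k w :: real
    using that by (simp add: left_diff_distrib)
  ultimately show ?case
    unfolding tail by blast
next
  case (step i)
  have exponent: "N - i = Suc (N - (i+1))" using step.hyps by simp
  have "omega_sol i + \<alpha> * (1 + (1 - \<kappa>) * omega_sol (i+1)) = 1 + (1 - \<kappa>) * omega_sol i"
    unfolding omega_sol_def exponent power_Suc
    by (rule omega_recursion_identity) (use \<kappa>_pos omega_denom_pos in auto)
  then show ?case
    using omega_tail_Suc[of i] step by simp
qed

lemma Momega_mult_omega_sol: "Momega *\<^sub>v vec (N+1) omega_sol = vec (N+1) (\<lambda>_. 1)"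
proof (rule eq_vecI)
  fix i assume "i < dim_vec (vec (N+1) (\<lambda>_. 1) :: real vec)"
  then have i: "i < N+1" by simp
  have entry: "(Momega *\<^sub>v vec (N+1) omega_sol) $ i = (\<Sum>k<N+1. Momega $$ (i,k) * omega_sol k)"
    using mult_mat_vec_nth_sum[OF Momega_carrier _ i, of "vec (N+1) omega_sol"] by simp
  have row: "Momega $$ (i,k) = (if k < i then 0 else if i = k then \<kappa> else \<alpha> ^ (k - i))" if "k < N+1" for k
    by (rule Momega_nth[OF i that])
  have "(\<Sum>k<N+1. Momega $$ (i,k) * omega_sol k) = (\<Sum>k = i..<N+1. Momega $$ (i,k) * omega_sol k)"
    by (rule sum.mono_neutral_right) (auto simp: row)
  also have "\<dots> = \<kappa> * omega_sol i + (\<Sum>k = Suc i..<N+1. \<alpha> ^ (k - i) * omega_sol k)"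
    unfolding sum.atLeast_Suc_lessThan[OF i] using i by (simp add: row)
  also have "(\<Sum>k = Suc i..<N+1. \<alpha> ^ (k - i) * omega_sol k) = omega_tail i - omega_sol i"
    unfolding omega_tail_def sum.atLeast_Suc_lessThan[OF i] by simp
  also have "\<kappa> * omega_sol i + (omega_tail i - omega_sol i) = 1"
    using omega_tail_eq[of i] i by (simp add: algebra_simps)
  finally show "(Momega *\<^sub>v vec (N+1) omega_sol) $ i = vec (N+1) (\<lambda>_. 1) $ i"
    using i entry by simp
qed (use Momega_carrier in simp)

lemma omega_eq:
  assumes "i \<in> {1..N+1}"
  shows "omega N \<alpha> \<theta> i = ((1 - \<alpha>) * \<kappa> + \<alpha> * (\<alpha> * (\<kappa> - 1) / \<kappa>) ^ (N + 1 - i)) / (\<kappa> * (\<kappa> - \<alpha> * (\<kappa> - 1)))"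
proof -
  have "omega_vec N \<alpha> \<theta> = vec (N+1) omega_sol"
    unfolding omega_vec_def Momega_def[symmetric]
    by (rule minv_mult_vec_eqI[OF Momega_carrier det_Momega_nonzero _ Momega_mult_omega_sol]) simp
  then show ?thesis
    using assms by (auto simp: omega_def omega_sol_def)
qed

lemma omega_last: "omega N \<alpha> \<theta> (N+1) = 1 / \<kappa>"
  using omega_eq[of "N+1"] omega_sol_last by (simp add: omega_sol_def)

end

theorem theorem5p4:
  fixes \<rho> T \<theta> :: real and N :: nat
  assumes "\<rho> > 0" "T > 0" "\<theta> \<ge> 0" "N \<ge> 2"
  defines "\<alpha> \<equiv> exp (- \<rho> * T / real N)"
  defines "\<kappa> \<equiv> 2 * \<theta> + 1/2"
  shows "(\<forall>i\<in>{1..N+1}. omega N \<alpha> \<theta> i =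
           ((1 - \<alpha>) * \<kappa> + \<alpha> * (\<alpha> * (\<kappa> - 1) / \<kappa>) ^ (N + 1 - i))
             / (\<kappa> * (\<kappa> - \<alpha> * (\<kappa> - 1))))
    \<and> omega N \<alpha> \<theta> (N+1) = 1 / \<kappa>
    \<and> nu N \<alpha> \<theta> 1 = (1 - \<alpha>) / delta N \<alpha> \<theta> (N+1) *
        (phi N \<alpha> \<kappa> 2 + (1 - \<alpha>) * (\<Sum>j=2..N. (\<alpha> * \<kappa>) ^ (j - 1) * phi N \<alpha> \<kappa> (j+1))
         + (\<alpha> * \<kappa>) ^ N)
    \<and> nu N \<alpha> \<theta> (N+1) = (1 - \<alpha>) / delta N \<alpha> \<theta> (N+1) *
        ((\<alpha> * (\<kappa> - 1)) ^ N
         + (1 - \<alpha>) * (\<Sum>j=2..N. (\<alpha> * (\<kappa> - 1)) ^ (N + 1 - j) * delta N \<alpha> \<theta> (j - 1))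
         + delta N \<alpha> \<theta> N)
    \<and> (\<forall>i\<in>{2..N}. nu N \<alpha> \<theta> i = (1 - \<alpha>) / delta N \<alpha> \<theta> (N+1) *
        ((\<alpha> * (\<kappa> - 1)) ^ (i - 1) * phi N \<alpha> \<kappa> (i+1)
         + (1 - \<alpha>) * (\<Sum>j=2..i-1. (\<alpha> * (\<kappa> - 1)) ^ (i - j) * delta N \<alpha> \<theta> (j - 1) * phi N \<alpha> \<kappa> (i+1))
         + (1 - \<alpha>) * (\<Sum>j=i..N. (\<alpha> * \<kappa>) ^ (j - i) * delta N \<alpha> \<theta> (i - 1) * phi N \<alpha> \<kappa> (j+1))
         + (\<alpha> * \<kappa>) ^ (N + 1 - i) * delta N \<alpha> \<theta> (i - 1)))"
proof -
  have "- \<rho> * T / real N < 0"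
    using assms(1,2,4) by (simp add: divide_neg_pos)
  then have "0 < \<alpha>" "\<alpha> < 1"
    by (simp_all add: \<alpha>_def)
  then interpret gamma_setting N \<alpha> \<theta>
    using assms(3,4) by unfold_locales
  show ?thesis
    unfolding \<kappa>_def using omega_eq omega_last nu_first nu_last nu_middle by blast
qed

end
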